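(* Let $K_f, M, B, P_m, P_f, k_{22}>0$, $b_{22}>0$, $I_m, I_f\ge 0$, $B_f\ge 0$ and $0\le\alpha\le 1$ be real numbers, and put $\mu=I_m/P_m$, $\nu=I_f/P_f$. Consider the two-port with hybrid matrix $H(s)=\begin{bmatrix} h_{11}&h_{12}\\ h_{21}&h_{22}\end{bmatrix}$ where $$h_{11}(s)=\frac{B_fMs^4+\big(B_f(B+P_m)+K_fM\big)s^3+\big(B_fI_m+K_f(B+P_m)\big)s^2+K_fI_ms}{a_4s^4+a_3s^3+a_2s^2+a_1s+a_0},$$ $$h_{12}(s)=\frac{B_fP_mP_fs^3+P_mP_f\big(K_f+B_f(\mu+\nu)\big)s^2+\big(B_fI_mI_f+K_fP_mP_f(\mu+\nu)\big)s+K_fI_mI_f}{a_4s^4+a_3s^3+a_2s^2+a_1s+a_0},$$ $h_{21}(s)=-1$, $h_{22}(s)=\dfrac{s}{b_{22}s+k_{22}}$, with $a_4=M$, $a_3=B+P_m+B_f(\alpha+P_mP_f)$, $a_2=I_m+K_f(\alpha+P_mP_f)+B_fP_mP_f(\mu+\nu)$, $a_1=B_fI_mI_f+K_fP_mP_f(\mu+\nu)$, $a_0=K_fI_mI_f$. Suppose that: the $h$-parameters have no poles in the open right half plane; any poles of the $h$-parameters on the imaginary axis are simple with real positive residues; and $\mathrm{Re}\,h_{11}(j\omega)\ge 0$ for all real $\omega$. If this two-port is absolutely stable, then $B_f>0$.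
   Context: This models a series (damped) elastic actuator (actuator inertia $M$, actuator damping $B$, physical spring $K_f$ in parallel with physical damper $B_f$; $B_f=0$ is a pure series elastic actuator) under velocity-sourced impedance control with PI motion controller gains $P_m,I_m$, PI force controller gains $P_f,I_f$, feed-forward parameter $\alpha$, and a virtual coupler consisting of a spring $k_{22}$ in parallel with a damper $b_{22}$. The hybrid matrix relates $(F_{\mathrm{int}},v_e)^T=H\,(-v_h,F_e)^T$. A two-port with hybrid matrix $H$ is called absolutely stable if (Llewellyn's criterion): (a) the $h$-parameters have no poles in the open right half plane; (b) any poles of the $h$-parameters on the imaginary axis are simple with real positive residues; (c) for all real $\omega$ (away from imaginary-axis poles), (i) $\mathrm{Re}\,h_{11}(j\omega)\ge 0$ and (ii) $2\,\mathrm{Re}\,h_{11}(j\omega)\,\mathrm{Re}\,h_{22}(j\omega)-\mathrm{Re}\big(h_{12}(j\omega)h_{21}(j\omega)\big)-\big|h_{12}(j\omega)h_{21}(j\omega)\big|\ge 0$. *)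

theory Defs
  imports "HOL-Complex_Analysis.Complex_Analysis"
begin

definition no_rhp_poles :: "(complex \<Rightarrow> complex) list \<Rightarrow> bool" where
  "no_rhp_poles hs \<longleftrightarrow> (\<forall>h\<in>set hs. \<forall>z. 0 < Re z \<longrightarrow> \<not> is_pole h z)"

definition imag_poles_simple_pos_res :: "(complex \<Rightarrow> complex) list \<Rightarrow> bool" where
  "imag_poles_simple_pos_res hs \<longleftrightarrow>
     (\<forall>h\<in>set hs. \<forall>z. Re z = 0 \<longrightarrow> is_pole h z \<longrightarrow>
        zorder h z = -1 \<and> Im (residue h z) = 0 \<and> 0 < Re (residue h z))"

definition away_from_imag_poles :: "(complex \<Rightarrow> complex) list \<Rightarrow> real \<Rightarrow> bool" where
  "away_from_imag_poles hs w \<longleftrightarrow> (\<forall>h\<in>set hs. \<not> is_pole h (\<i> * complex_of_real w))"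

definition re_h11_nonneg :: "(complex \<Rightarrow> complex) list \<Rightarrow> (complex \<Rightarrow> complex) \<Rightarrow> bool" where
  "re_h11_nonneg hs h11 \<longleftrightarrow>
     (\<forall>w::real. away_from_imag_poles hs w \<longrightarrow> 0 \<le> Re (h11 (\<i> * complex_of_real w)))"

definition absolutely_stable ::
  "(complex \<Rightarrow> complex) \<Rightarrow> (complex \<Rightarrow> complex) \<Rightarrow> (complex \<Rightarrow> complex) \<Rightarrow> (complex \<Rightarrow> complex) \<Rightarrow> bool" where
  "absolutely_stable h11 h12 h21 h22 \<longleftrightarrow>
     (let hs = [h11, h12, h21, h22] in
       no_rhp_poles hs \<and> imag_poles_simple_pos_res hs \<and>
       (\<forall>w::real. away_from_imag_poles hs w \<longrightarrow>
          (let s = \<i> * complex_of_real w in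
            0 \<le> Re (h11 s) \<and>
            0 \<le> 2 * Re (h11 s) * Re (h22 s) - Re (h12 s * h21 s) - cmod (h12 s * h21 s))))"

text \<open>They are rational functions; remove_sings fills in removable
  singularities so that the functions take their true (continuous) values there.\<close>

definition sea_den ::
  "real \<Rightarrow> real \<Rightarrow> real \<Rightarrow> real \<Rightarrow> real \<Rightarrow> real \<Rightarrow> real \<Rightarrow> real \<Rightarrow> real \<Rightarrow> complex \<Rightarrow> complex" where
  "sea_den Kf M B Bf Pm Iim Pf Iif alpha s =
     (let mu = Iim / Pm; nu = Iif / Pf;
          a4 = M;
          a3 = B + Pm + Bf * (alpha + Pm * Pf);
          a2 = Iim + Kf * (alpha + Pm * Pf) + Bf * Pm * Pf * (mu + nu);
          a1 = Bf * Iim * Iif + Kf * Pm * Pf * (mu + nu);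
          a0 = Kf * Iim * Iif
      in of_real a4 * s^4 + of_real a3 * s^3 + of_real a2 * s^2 + of_real a1 * s + of_real a0)"

definition sea_h11 ::
  "real \<Rightarrow> real \<Rightarrow> real \<Rightarrow> real \<Rightarrow> real \<Rightarrow> real \<Rightarrow> real \<Rightarrow> real \<Rightarrow> real \<Rightarrow> complex \<Rightarrow> complex" where
  "sea_h11 Kf M B Bf Pm Iim Pf Iif alpha = remove_sings (\<lambda>s.
     (of_real (Bf * M) * s^4 + of_real (Bf * (B + Pm) + Kf * M) * s^3
       + of_real (Bf * Iim + Kf * (B + Pm)) * s^2 + of_real (Kf * Iim) * s)
     / sea_den Kf M B Bf Pm Iim Pf Iif alpha s)"

definition sea_h12 ::
  "real \<Rightarrow> real \<Rightarrow> real \<Rightarrow> real \<Rightarrow> real \<Rightarrow> real \<Rightarrow> real \<Rightarrow> real \<Rightarrow> real \<Rightarrow> complex \<Rightarrow> complex" where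
  "sea_h12 Kf M B Bf Pm Iim Pf Iif alpha = remove_sings (\<lambda>s.
     (let mu = Iim / Pm; nu = Iif / Pf in
       (of_real (Bf * Pm * Pf) * s^3 + of_real (Pm * Pf * (Kf + Bf * (mu + nu))) * s^2
         + of_real (Bf * Iim * Iif + Kf * Pm * Pf * (mu + nu)) * s + of_real (Kf * Iim * Iif))
       / sea_den Kf M B Bf Pm Iim Pf Iif alpha s))"

definition sea_h21 :: "complex \<Rightarrow> complex" where
  "sea_h21 = (\<lambda>s. -1)"

definition sea_h22 :: "real \<Rightarrow> real \<Rightarrow> complex \<Rightarrow> complex" where
  "sea_h22 b22 k22 = remove_sings (\<lambda>s. s / (of_real b22 * s + of_real k22))"

end

(*
  With Bf = 0, put s = i w and write h11 = N11/D, h12 = N12/D.  Then Re (N12 * cnj D) is an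
  even polynomial in w of degree 6 with leading coefficient -Kf Pm Pf M, whereas in
  Re (N11 * cnj D) the degree-6 terms cancel, and Re h22 stays in [0, 1/b22].  Since h21 = -1,
  Llewellyn's condition (ii) says 2 Re h11 Re h22 + Re h12 >= |h12| >= 0; multiplied by |D|^2
  this is violated at every large enough frequency w, where D (i w) does not vanish either.
*)

theory Submission
  imports Defs "HOL-Real_Asymp.Real_Asymp"
begin

definition sea_num11 :: "real \<Rightarrow> real \<Rightarrow> real \<Rightarrow> real \<Rightarrow> real \<Rightarrow> real \<Rightarrow> complex \<Rightarrow> complex" where
  "sea_num11 Kf M B Bf Pm Iim s =
     of_real (Bf * M) * s^4 + of_real (Bf * (B + Pm) + Kf * M) * s^3
       + of_real (Bf * Iim + Kf * (B + Pm)) * s^2 + of_real (Kf * Iim) * s"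

definition sea_num12 :: "real \<Rightarrow> real \<Rightarrow> real \<Rightarrow> real \<Rightarrow> real \<Rightarrow> real \<Rightarrow> complex \<Rightarrow> complex" where
  "sea_num12 Kf Bf Pm Iim Pf Iif s =
     (let mu = Iim / Pm; nu = Iif / Pf in
       of_real (Bf * Pm * Pf) * s^3 + of_real (Pm * Pf * (Kf + Bf * (mu + nu))) * s^2
         + of_real (Bf * Iim * Iif + Kf * Pm * Pf * (mu + nu)) * s + of_real (Kf * Iim * Iif))"

lemma sea_h11_eq:
  "sea_h11 Kf M B Bf Pm Iim Pf Iif alpha =
     remove_sings (\<lambda>s. sea_num11 Kf M B Bf Pm Iim s / sea_den Kf M B Bf Pm Iim Pf Iif alpha s)"
  unfolding sea_h11_def sea_num11_def ..

lemma sea_h12_eq: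
  "sea_h12 Kf M B Bf Pm Iim Pf Iif alpha =
     remove_sings (\<lambda>s. sea_num12 Kf Bf Pm Iim Pf Iif s / sea_den Kf M B Bf Pm Iim Pf Iif alpha s)"
  unfolding sea_h12_def sea_num12_def Let_def ..

lemma analytic_on_sea_den: "sea_den Kf M B Bf Pm Iim Pf Iif alpha analytic_on A"
  unfolding sea_den_def Let_def by (intro analytic_intros)

lemma analytic_on_sea_num11: "sea_num11 Kf M B Bf Pm Iim analytic_on A"
  unfolding sea_num11_def by (intro analytic_intros)

lemma analytic_on_sea_num12: "sea_num12 Kf Bf Pm Iim Pf Iif analytic_on A"
  unfolding sea_num12_def Let_def by (intro analytic_intros)

lemma remove_sings_divide:
  assumes "f analytic_on {z}" "g analytic_on {z}" "g z \<noteq> 0"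
  shows "remove_sings (\<lambda>s. f s / g s) z = f z / g z"
    and "\<not> is_pole (remove_sings (\<lambda>s. f s / g s)) z"
proof -
  have "(\<lambda>s. f s / g s) analytic_on {z}"
    using assms by (intro analytic_on_divide) auto
  then show "remove_sings (\<lambda>s. f s / g s) z = f z / g z"
    and "\<not> is_pole (remove_sings (\<lambda>s. f s / g s)) z"
    by (auto intro!: analytic_at_imp_no_pole remove_sings_analytic_on)
qed

lemma sea_h11_at:
  assumes "sea_den Kf M B Bf Pm Iim Pf Iif alpha s \<noteq> 0"
  shows "sea_h11 Kf M B Bf Pm Iim Pf Iif alpha s
           = sea_num11 Kf M B Bf Pm Iim s / sea_den Kf M B Bf Pm Iim Pf Iif alpha s"
    and "\<not> is_pole (sea_h11 Kf M B Bf Pm Iim Pf Iif alpha) s"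
  unfolding sea_h11_eq
  using remove_sings_divide[OF analytic_on_sea_num11 analytic_on_sea_den assms] by auto

lemma sea_h12_at:
  assumes "sea_den Kf M B Bf Pm Iim Pf Iif alpha s \<noteq> 0"
  shows "sea_h12 Kf M B Bf Pm Iim Pf Iif alpha s
           = sea_num12 Kf Bf Pm Iim Pf Iif s / sea_den Kf M B Bf Pm Iim Pf Iif alpha s"
    and "\<not> is_pole (sea_h12 Kf M B Bf Pm Iim Pf Iif alpha) s"
  unfolding sea_h12_eq
  using remove_sings_divide[OF analytic_on_sea_num12 analytic_on_sea_den assms] by auto

lemma sea_h22_at:
  assumes "of_real b22 * s + of_real k22 \<noteq> 0"
  shows "sea_h22 b22 k22 s = s / (of_real b22 * s + of_real k22)"
    and "\<not> is_pole (sea_h22 b22 k22) s"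
  unfolding sea_h22_def
  using remove_sings_divide[of "\<lambda>s. s" s "\<lambda>s. of_real b22 * s + of_real k22"] assms
  by (simp_all add: analytic_intros)

lemma Re_sea_h22_imag_bounds:
  assumes "0 < b22" "0 < k22"
  shows "0 \<le> Re (sea_h22 b22 k22 (\<i> * of_real w))"
    and "Re (sea_h22 b22 k22 (\<i> * of_real w)) \<le> 1 / b22"
proof -
  have "of_real b22 * (\<i> * of_real w) + of_real k22 = Complex k22 (b22 * w)"
    by (simp add: complex_eq_iff)
  with assms have Re_eq: "Re (sea_h22 b22 k22 (\<i> * of_real w)) = b22 * w^2 / (k22^2 + (b22 * w)^2)"
    by (simp add: sea_h22_at Re_divide power2_eq_square complex_eq_iff)
  have "b22 * w^2 * b22 \<le> k22^2 + (b22 * w)^2"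
    by (simp add: power2_eq_square)
  with assms show "Re (sea_h22 b22 k22 (\<i> * of_real w)) \<le> 1 / b22"
    unfolding Re_eq by (simp add: field_simps add_pos_nonneg)
  show "0 \<le> Re (sea_h22 b22 k22 (\<i> * of_real w))"
    unfolding Re_eq using assms by simp
qed

lemma eventually_sea_den_imag_nonzero:
  assumes "0 < M"
  shows "eventually (\<lambda>w. sea_den Kf M B Bf Pm Iim Pf Iif alpha (\<i> * of_real w) \<noteq> 0) at_top"
proof -
  define a2 where "a2 = Iim + Kf * (alpha + Pm * Pf) + Bf * Pm * Pf * (Iim / Pm + Iif / Pf)"
  have Re_eq: "Re (sea_den Kf M B Bf Pm Iim Pf Iif alpha (\<i> * of_real w))
                 = M * w^4 - a2 * w^2 + Kf * Iim * Iif" for w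
    unfolding a2_def by (simp add: sea_den_def Let_def power_mult_distrib eval_nat_numeral)
  have "eventually (\<lambda>w. 0 < M * w^4 - a2 * w^2 + Kf * Iim * Iif) at_top"
    using assms by real_asymp
  then show ?thesis
    by eventually_elim (metis Re_eq zero_complex.sel(1) less_irrefl)
qed

lemma sea_away_from_imag_poles:
  assumes "0 < k22" "sea_den Kf M B Bf Pm Iim Pf Iif alpha (\<i> * of_real w) \<noteq> 0"
  shows "away_from_imag_poles [sea_h11 Kf M B Bf Pm Iim Pf Iif alpha,
           sea_h12 Kf M B Bf Pm Iim Pf Iif alpha, sea_h21, sea_h22 b22 k22] w"
  using sea_h11_at(2)[OF assms(2)] sea_h12_at(2)[OF assms(2)]
    sea_h22_at(2)[of b22 "\<i> * of_real w" k22] assms(1)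
  by (auto simp: away_from_imag_poles_def sea_h21_def complex_eq_iff)

lemma absolutely_stable_neg_h21_imp_Re_cnj_nonneg:
  assumes "absolutely_stable h11 h12 (\<lambda>s. -1) h22"
    and "away_from_imag_poles [h11, h12, \<lambda>s. -1, h22] w"
    and "h11 (\<i> * of_real w) = n11 / d" "h12 (\<i> * of_real w) = n12 / d"
  shows "0 \<le> 2 * Re (h22 (\<i> * of_real w)) * Re (n11 * cnj d) + Re (n12 * cnj d)"
proof -
  let ?r = "2 * Re (h22 (\<i> * of_real w))"
  from assms(1,2) have "cmod (h12 (\<i> * of_real w))
                          \<le> ?r * Re (h11 (\<i> * of_real w)) + Re (h12 (\<i> * of_real w))"
    unfolding absolutely_stable_def by (simp add: Let_def algebra_simps)
  then have "cmod (n12 / d) \<le> ?r * Re (n11 / d) + Re (n12 / d)"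
    unfolding assms(3,4) .
  then have "0 \<le> Re ((of_real ?r * n11 + n12) / d)"
    by (simp add: Re_divide add_divide_distrib[symmetric] algebra_simps)
      (metis norm_ge_zero order_trans)
  then show ?thesis
    by (simp add: Re_complex_div_ge_0 algebra_simps)
qed

lemma Re_sea_num11_cnj_den_Bf0:
  obtains p q where
    "\<And>w. Re (sea_num11 Kf M B 0 Pm Iim (\<i> * of_real w)
              * cnj (sea_den Kf M B 0 Pm Iim Pf Iif alpha (\<i> * of_real w))) = p * w^4 + q * w^2"
proof
  define a3 a2 a1 a0 where "a3 = B + Pm" and "a2 = Iim + Kf * (alpha + Pm * Pf)"
    and "a1 = Kf * Pm * Pf * (Iim / Pm + Iif / Pf)" and "a0 = Kf * Iim * Iif"
  fix w :: real
  show "Re (sea_num11 Kf M B 0 Pm Iim (\<i> * of_real w)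
          * cnj (sea_den Kf M B 0 Pm Iim Pf Iif alpha (\<i> * of_real w)))
        = Kf * (a3 * a2 - Iim * a3 - M * a1) * w^4 + Kf * (Iim * a1 - a3 * a0) * w^2"
    unfolding a3_def a2_def a1_def a0_def
    by (simp add: sea_num11_def sea_den_def Let_def power_mult_distrib eval_nat_numeral) algebra
qed

lemma Re_sea_num12_cnj_den_Bf0:
  obtains c4 c2 c0 where
    "\<And>w. Re (sea_num12 Kf 0 Pm Iim Pf Iif (\<i> * of_real w)
              * cnj (sea_den Kf M B 0 Pm Iim Pf Iif alpha (\<i> * of_real w)))
           = c4 * w^4 + c2 * w^2 + c0 - Kf * Pm * Pf * M * w^6"
proof
  define a3 a2 a1 a0 where "a3 = B + Pm" and "a2 = Iim + Kf * (alpha + Pm * Pf)"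
    and "a1 = Kf * Pm * Pf * (Iim / Pm + Iif / Pf)" and "a0 = Kf * Iim * Iif"
  fix w :: real
  show "Re (sea_num12 Kf 0 Pm Iim Pf Iif (\<i> * of_real w)
          * cnj (sea_den Kf M B 0 Pm Iim Pf Iif alpha (\<i> * of_real w)))
        = (a0 * M + Kf * Pm * Pf * a2 - a1 * a3) * w^4
          + (a1^2 - a0 * a2 - Kf * Pm * Pf * a0) * w^2 + a0^2 - Kf * Pm * Pf * M * w^6"
    unfolding a3_def a2_def a1_def a0_def
    by (simp add: sea_num12_def sea_den_def Let_def power_mult_distrib eval_nat_numeral) algebra
qed

lemma eventually_sextic_dominates_bounded_quartic:
  fixes c :: "real \<Rightarrow> real"
  assumes "0 < A" and c_bound: "\<And>w. \<bar>c w\<bar> \<le> \<beta>"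
  shows "eventually (\<lambda>w. (p * w^4 + q * w^2) * c w + c4 * w^4 + c2 * w^2 + c0 < A * w^6) at_top"
proof -
  have bound: "(p * w^4 + q * w^2) * c w \<le> \<beta> * (\<bar>p\<bar> * w^4 + \<bar>q\<bar> * w^2)" for w
  proof -
    have "(p * w^4 + q * w^2) * c w \<le> \<bar>p * w^4 + q * w^2\<bar> * \<bar>c w\<bar>"
      by (metis abs_ge_self abs_mult)
    also have "\<dots> \<le> (\<bar>p\<bar> * w^4 + \<bar>q\<bar> * w^2) * \<beta>"
      using c_bound abs_triangle_ineq[of "p * w^4" "q * w^2"]
      by (intro mult_mono) (auto simp: abs_mult)
    finally show ?thesis by (simp add: mult.commute)
  qed
  have "eventually (\<lambda>w. \<beta> * (\<bar>p\<bar> * w^4 + \<bar>q\<bar> * w^2) + c4 * w^4 + c2 * w^2 + c0 < A * w^6) at_top"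
    using \<open>0 < A\<close> by real_asymp
  then show ?thesis
    by (rule eventually_mono) (use bound in \<open>smt (verit)\<close>)
qed

theorem lemma7:
  fixes Kf M B Bf Pm Iim Pf Iif alpha k22 b22 :: real
  assumes "0 < Kf" "0 < M" "0 < B" "0 < Pm" "0 < Pf" "0 < k22" "0 < b22"
    and "0 \<le> Iim" "0 \<le> Iif" "0 \<le> Bf" "0 \<le> alpha" "alpha \<le> 1"
  defines "h11 \<equiv> sea_h11 Kf M B Bf Pm Iim Pf Iif alpha"
    and "h12 \<equiv> sea_h12 Kf M B Bf Pm Iim Pf Iif alpha"
    and "h21 \<equiv> sea_h21"
    and "h22 \<equiv> sea_h22 b22 k22"
  assumes "no_rhp_poles [h11, h12, h21, h22]"
    and "imag_poles_simple_pos_res [h11, h12, h21, h22]"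
    and "re_h11_nonneg [h11, h12, h21, h22] h11"
    and "absolutely_stable h11 h12 h21 h22"
  shows "0 < Bf"
proof (rule ccontr)
  assume "\<not> 0 < Bf"
  with \<open>0 \<le> Bf\<close> have Bf: "Bf = 0" by simp
  define D where "D w = sea_den Kf M B 0 Pm Iim Pf Iif alpha (\<i> * of_real w)" for w
  define N11 where "N11 w = sea_num11 Kf M B 0 Pm Iim (\<i> * of_real w)" for w
  define N12 where "N12 w = sea_num12 Kf 0 Pm Iim Pf Iif (\<i> * of_real w)" for w
  define c where "c w = 2 * Re (h22 (\<i> * of_real w))" for w
  obtain p q where R11: "\<And>w. Re (N11 w * cnj (D w)) = p * w^4 + q * w^2"
    using Re_sea_num11_cnj_den_Bf0 unfolding N11_def D_def by metis
  obtain c4 c2 c0 where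
    R12: "\<And>w. Re (N12 w * cnj (D w)) = c4 * w^4 + c2 * w^2 + c0 - Kf * Pm * Pf * M * w^6"
    using Re_sea_num12_cnj_den_Bf0 unfolding N12_def D_def by metis
  have "\<bar>c w\<bar> \<le> 2 / b22" for w
    using Re_sea_h22_imag_bounds[OF \<open>0 < b22\<close> \<open>0 < k22\<close>, of w]
    unfolding c_def h22_def by auto
  then have "eventually (\<lambda>w. D w \<noteq> 0 \<and>
      (p * w^4 + q * w^2) * c w + c4 * w^4 + c2 * w^2 + c0 < Kf * Pm * Pf * M * w^6) at_top"
    unfolding D_def using \<open>0 < Kf\<close> \<open>0 < M\<close> \<open>0 < Pm\<close> \<open>0 < Pf\<close>
    by (intro eventually_conj eventually_sea_den_imag_nonzero
        eventually_sextic_dominates_bounded_quartic) auto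
  then obtain w where "D w \<noteq> 0"
    and violated: "(p * w^4 + q * w^2) * c w + c4 * w^4 + c2 * w^2 + c0 < Kf * Pm * Pf * M * w^6"
    by (auto simp: eventually_at_top_linorder)
  with \<open>0 < k22\<close> \<open>absolutely_stable h11 h12 h21 h22\<close>
  have "0 \<le> c w * Re (N11 w * cnj (D w)) + Re (N12 w * cnj (D w))"
    unfolding c_def h11_def h12_def h21_def h22_def D_def N11_def N12_def Bf sea_h21_def
    by (intro absolutely_stable_neg_h21_imp_Re_cnj_nonneg[OF _
          sea_away_from_imag_poles[unfolded sea_h21_def] sea_h11_at(1) sea_h12_at(1)])
  with violated show False
    unfolding R11 R12 by (simp add: algebra_simps)
qed

end
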